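(* Let $(f_n)$ be a sequence of complex rational maps of degree $d\ge2$ and $(M,\eta)$ a $g$-rescaling adapted to $(f_n)$ whose limit $(M\cdot f\cdot M^{-1})_\eta$ is conjugate by a Möbius transformation over $\mathscr H_\eta$ to a rational map with coefficients in $\mathbb C\subset\mathscr H_\eta$ (embedded via constant sequences). Then $\eta=(1)$.
   Context: Fix a non-principal ultrafilter $\omega$ on $\mathbb N$; $\lim$ denotes the limit along $\omega$. A scale is an equivalence class of bounded sequences of positive reals, $(\varepsilon_n)\sim(\eta_n)$ iff $\lim\varepsilon_n/\eta_n\in(0,\infty)$, totally ordered by $\varepsilon\le\eta$ iff $\lim \varepsilon_n/\eta_n<\infty$ ($\varepsilon<\eta$ iff the limit is $0$), with maximum the trivial scale $(1)$. For a scale $\varepsilon$, $\mathscr H_\varepsilon$ is the quotient of $\{(z_n)\in\mathbb C^{\mathbb N}:\lim|z_n|^{\varepsilon_n}<\infty\}$ by $\{(z_n):\lim|z_n|^{\varepsilon_n}=0\}$ with norm $\lim|z_n|^{\min(1,\varepsilon_n)}$; $\mathscr H_{(1)}\cong\mathbb C$, and for $\varepsilon<(1)$ it is an algebraically closed complete non-Archimedean field with residue field $\widetilde{\mathscr H}_\varepsilon$ of characteristic $0$. Limits: for a sequence $(g_n)$ of complex rational maps of degree $d$, write $g_n=[P_n:Q_n]$ with coefficients of maximal modulus $1$; the coefficient sequences give $P_\varepsilon,Q_\varepsilon$ over $\mathscr H_\varepsilon$; dividing by their gcd gives the limit $g_\varepsilon$. $M\cdot f\cdot M^{-1}=(M_n\circ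 f_n\circ M_n^{-1})$. Over a non-Archimedean field, $g$ has good reduction iff $|\mathrm{Res}(g)|=|\mathrm{Res}(P,Q)|/\max(|\text{coefficients}|)^{2d}=1$; potential good reduction iff conjugate over the field to a map with good reduction; by convention a map over $\mathscr H_{(1)}=\mathbb C$ never has potential good reduction. For $\varepsilon<(1)$, $x_g$ is the Gauss point of the Berkovich line over $\mathscr H_\varepsilon$; directions at $x_g$ are identified with $\mathbb P^1(\widetilde{\mathscr H}_\varepsilon)$; a direction $v$ at a fixed point $x$ of $g$ is bad if its open component meets $g^{-1}(x)$; for $\varepsilon<\eta$ the canonical map $\mathbb P^1(\widetilde{\mathscr H}_\varepsilon)\to\mathbb P^1(\mathscr H_\eta)$ sends a point with homogeneous coordinates given by complex sequences of modulus $\le1$ (one of modulus $1$) to the point with the same coordinate sequences. A $g$-rescaling is a pair $(M,\eta)$ of a sequence of complex Möbius transformations and a scale. It is adapted to $f$ if: (A1) $(M\cdot f\cdot M^{-1})_\eta$ has degree $\delta\ge1$; (A2) if $\eta<(1)$ it does not have potential good reduction; (A3) if $\delta=1$, there is a scale $\varepsilon<\eta$ such that $(M\cdot f\cdot M^{-1})_\varepsilon$ fixes $x_g$ with local degree $1$, and a bad direction $v$ at $x_g$ whose image in $\mathbb P^1(\mathscr H_\eta)$ has infinite orbit under $(M\cdot f\cdot M^{-1})_\eta$. *)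

theory Defs
  imports "Jordan_Normal_Form.Determinant" "HOL-Computational_Algebra.Polynomial"
          "HOL-Library.Extended_Real"
begin

definition nonprincipal_ultrafilter :: "nat filter \<Rightarrow> bool" where
  "nonprincipal_ultrafilter U \<longleftrightarrow> U \<noteq> bot
     \<and> (\<forall>A. eventually (\<lambda>n. n \<in> A) U \<or> eventually (\<lambda>n. n \<notin> A) U)
     \<and> (\<forall>m. eventually (\<lambda>n. n \<noteq> m) U)"

text \<open>Limit along the ultrafilter, taken in the compact space of extended reals.\<close>
definition ulim :: "nat filter \<Rightarrow> (nat \<Rightarrow> ereal) \<Rightarrow> ereal" where
  "ulim U x = Lim U x"

definition is_scale :: "(nat \<Rightarrow> real) \<Rightarrow> bool" where
  "is_scale \<epsilon> \<longleftrightarrow> (\<forall>n. 0 < \<epsilon> n) \<and> bdd_above (range \<epsilon>)"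

definition scale_le :: "nat filter \<Rightarrow> (nat \<Rightarrow> real) \<Rightarrow> (nat \<Rightarrow> real) \<Rightarrow> bool" where
  "scale_le U \<epsilon> \<eta> \<longleftrightarrow> ulim U (\<lambda>n. ereal (\<epsilon> n / \<eta> n)) < \<infinity>"

definition scale_less :: "nat filter \<Rightarrow> (nat \<Rightarrow> real) \<Rightarrow> (nat \<Rightarrow> real) \<Rightarrow> bool" where
  "scale_less U \<epsilon> \<eta> \<longleftrightarrow> ulim U (\<lambda>n. ereal (\<epsilon> n / \<eta> n)) = 0"

definition scale_equiv :: "nat filter \<Rightarrow> (nat \<Rightarrow> real) \<Rightarrow> (nat \<Rightarrow> real) \<Rightarrow> bool" where
  "scale_equiv U \<epsilon> \<eta> \<longleftrightarrow> 0 < ulim U (\<lambda>n. ereal (\<epsilon> n / \<eta> n))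
                          \<and> ulim U (\<lambda>n. ereal (\<epsilon> n / \<eta> n)) < \<infinity>"

definition one_scale :: "nat \<Rightarrow> real" where
  "one_scale = (\<lambda>_. 1)"

section \<open>The fields H_eps, represented by complex sequences\<close>

definition hval :: "nat filter \<Rightarrow> (nat \<Rightarrow> real) \<Rightarrow> (nat \<Rightarrow> complex) \<Rightarrow> ereal" where
  "hval U \<epsilon> z = ulim U (\<lambda>n. ereal (cmod (z n) powr \<epsilon> n))"

definition in_H :: "nat filter \<Rightarrow> (nat \<Rightarrow> real) \<Rightarrow> (nat \<Rightarrow> complex) \<Rightarrow> bool" where
  "in_H U \<epsilon> z \<longleftrightarrow> hval U \<epsilon> z < \<infinity>"

definition hzero :: "nat filter \<Rightarrow> (nat \<Rightarrow> real) \<Rightarrow> (nat \<Rightarrow> complex) \<Rightarrow> bool" where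
  "hzero U \<epsilon> z \<longleftrightarrow> hval U \<epsilon> z = 0"

definition heq :: "nat filter \<Rightarrow> (nat \<Rightarrow> real) \<Rightarrow> (nat \<Rightarrow> complex) \<Rightarrow> (nat \<Rightarrow> complex) \<Rightarrow> bool" where
  "heq U \<epsilon> z w \<longleftrightarrow> hzero U \<epsilon> (\<lambda>n. z n - w n)"

definition hnorm :: "nat filter \<Rightarrow> (nat \<Rightarrow> real) \<Rightarrow> (nat \<Rightarrow> complex) \<Rightarrow> ereal" where
  "hnorm U \<epsilon> z = ulim U (\<lambda>n. ereal (cmod (z n) powr min 1 (\<epsilon> n)))"

text \<open>A binary form of degree d is represented by its dehomogenisation, a polynomial of
  degree at most d: coefficient k is the coefficient of X^k Y^(d-k).\<close>

definition hform_eval :: "nat \<Rightarrow> complex poly \<Rightarrow> complex \<Rightarrow> complex \<Rightarrow> complex" where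
  "hform_eval d P x y = (\<Sum>k\<le>d. coeff P k * x ^ k * y ^ (d - k))"

definition hform_subst :: "nat \<Rightarrow> complex poly \<Rightarrow> complex poly \<Rightarrow> complex poly \<Rightarrow> complex poly" where
  "hform_subst d P X Y = (\<Sum>k\<le>d. smult (coeff P k) (X ^ k * Y ^ (d - k)))"

text \<open>Sylvester matrix of two binary forms of degree d (coefficients listed from X^d down).\<close>
definition sylvester_hom :: "nat \<Rightarrow> complex poly \<Rightarrow> complex poly \<Rightarrow> complex mat" where
  "sylvester_hom d P Q = mat (2*d) (2*d) (\<lambda>(i,j).
      if i < d then (if i \<le> j \<and> j \<le> i + d then coeff P (d + i - j) else 0)
      else (if i - d \<le> j \<and> j \<le> i then coeff Q (i - j) else 0))"

definition hres :: "nat \<Rightarrow> complex poly \<Rightarrow> complex poly \<Rightarrow> complex" where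
  "hres d P Q = det (sylvester_hom d P Q)"

definition ratmap :: "nat \<Rightarrow> complex poly \<Rightarrow> complex poly \<Rightarrow> bool" where
  "ratmap d P Q \<longleftrightarrow> degree P \<le> d \<and> degree Q \<le> d \<and> hres d P Q \<noteq> 0"

type_synonym mob = "complex \<times> complex \<times> complex \<times> complex"

definition mob_det :: "mob \<Rightarrow> complex" where
  "mob_det N = (case N of (a,b,c,e) \<Rightarrow> a*e - b*c)"

text \<open>N o [P:Q] o N^{-1} in homogeneous coordinates (N = [[a,b],[c,e]]; N^{-1} via the adjugate).\<close>
definition conj_mob :: "nat \<Rightarrow> mob \<Rightarrow> complex poly \<Rightarrow> complex poly \<Rightarrow> complex poly \<times> complex poly" where
  "conj_mob d N P Q = (case N of (a,b,c,e) \<Rightarrow>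
      let X' = [:-b, e:]; Y' = [:a, -c:];
          U = hform_subst d P X' Y'; V = hform_subst d Q X' Y'
      in (smult a U + smult b V, smult c U + smult e V))"

definition conjF :: "nat \<Rightarrow> (nat \<Rightarrow> mob) \<Rightarrow> (nat \<Rightarrow> complex poly) \<Rightarrow> (nat \<Rightarrow> complex poly) \<Rightarrow> nat \<Rightarrow> complex poly" where
  "conjF d N P Q = (\<lambda>n. fst (conj_mob d (N n) (P n) (Q n)))"

definition conjG :: "nat \<Rightarrow> (nat \<Rightarrow> mob) \<Rightarrow> (nat \<Rightarrow> complex poly) \<Rightarrow> (nat \<Rightarrow> complex poly) \<Rightarrow> nat \<Rightarrow> complex poly" where
  "conjG d N P Q = (\<lambda>n. snd (conj_mob d (N n) (P n) (Q n)))"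

definition complex_mob_seq :: "(nat \<Rightarrow> mob) \<Rightarrow> bool" where
  "complex_mob_seq M \<longleftrightarrow> (\<forall>n. mob_det (M n) \<noteq> 0)"

definition mob_H :: "nat filter \<Rightarrow> (nat \<Rightarrow> real) \<Rightarrow> (nat \<Rightarrow> mob) \<Rightarrow> bool" where
  "mob_H U \<eta> N \<longleftrightarrow>
     in_H U \<eta> (\<lambda>n. case N n of (a,b,c,e) \<Rightarrow> a) \<and> in_H U \<eta> (\<lambda>n. case N n of (a,b,c,e) \<Rightarrow> b) \<and>
     in_H U \<eta> (\<lambda>n. case N n of (a,b,c,e) \<Rightarrow> c) \<and> in_H U \<eta> (\<lambda>n. case N n of (a,b,c,e) \<Rightarrow> e) \<and>
     \<not> hzero U \<eta> (\<lambda>n. mob_det (N n))"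

definition form_H :: "nat filter \<Rightarrow> (nat \<Rightarrow> real) \<Rightarrow> nat \<Rightarrow> (nat \<Rightarrow> complex poly) \<Rightarrow> bool" where
  "form_H U \<epsilon> d F \<longleftrightarrow> (\<forall>n. degree (F n) \<le> d) \<and> (\<forall>k. in_H U \<epsilon> (\<lambda>n. coeff (F n) k))"

definition feq :: "nat filter \<Rightarrow> (nat \<Rightarrow> real) \<Rightarrow> (nat \<Rightarrow> complex poly) \<Rightarrow> (nat \<Rightarrow> complex poly) \<Rightarrow> bool" where
  "feq U \<epsilon> F G \<longleftrightarrow> (\<forall>k. heq U \<epsilon> (\<lambda>n. coeff (F n) k) (\<lambda>n. coeff (G n) k))"

text \<open>Two forms of degree d over H_eps without common zero in P^1 (coprime).\<close>
definition coprime_H :: "nat filter \<Rightarrow> (nat \<Rightarrow> real) \<Rightarrow> nat \<Rightarrow> (nat \<Rightarrow> complex poly) \<Rightarrow> (nat \<Rightarrow> complex poly) \<Rightarrow> bool" where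
  "coprime_H U \<epsilon> d A B \<longleftrightarrow>
     (if d = 0 then \<not> (hzero U \<epsilon> (\<lambda>n. coeff (A n) 0) \<and> hzero U \<epsilon> (\<lambda>n. coeff (B n) 0))
      else \<not> hzero U \<epsilon> (\<lambda>n. hres d (A n) (B n)))"

text \<open>Normalisation of [P:Q] so that coefficients have maximal modulus 1.\<close>
definition maxmod :: "nat \<Rightarrow> complex poly \<Rightarrow> complex poly \<Rightarrow> real" where
  "maxmod d P Q = Max ((\<lambda>k. cmod (coeff P k)) ` {..d} \<union> (\<lambda>k. cmod (coeff Q k)) ` {..d})"

definition normF :: "nat \<Rightarrow> (nat \<Rightarrow> complex poly) \<Rightarrow> (nat \<Rightarrow> complex poly) \<Rightarrow> nat \<Rightarrow> complex poly" where
  "normF d P Q = (\<lambda>n. smult (complex_of_real (1 / maxmod d (P n) (Q n))) (P n))"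

definition normG :: "nat \<Rightarrow> (nat \<Rightarrow> complex poly) \<Rightarrow> (nat \<Rightarrow> complex poly) \<Rightarrow> nat \<Rightarrow> complex poly" where
  "normG d P Q = (\<lambda>n. smult (complex_of_real (1 / maxmod d (P n) (Q n))) (Q n))"

text \<open>[A:B] (forms of degree delta over H_eps) is the limit g_eps of the sequence [P_n:Q_n] of
  degree-d maps: P_eps = H*A, Q_eps = H*B with A,B coprime, i.e. [A:B] is [P_eps:Q_eps]
  divided by their gcd H.\<close>
definition is_limit :: "nat filter \<Rightarrow> (nat \<Rightarrow> real) \<Rightarrow> nat \<Rightarrow> (nat \<Rightarrow> complex poly) \<Rightarrow> (nat \<Rightarrow> complex poly)
    \<Rightarrow> nat \<Rightarrow> (nat \<Rightarrow> complex poly) \<Rightarrow> (nat \<Rightarrow> complex poly) \<Rightarrow> bool" where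
  "is_limit U \<epsilon> d P Q \<delta> A B \<longleftrightarrow> \<delta> \<le> d \<and> form_H U \<epsilon> \<delta> A \<and> form_H U \<epsilon> \<delta> B \<and> coprime_H U \<epsilon> \<delta> A B \<and>
     (\<exists>H. form_H U \<epsilon> (d - \<delta>) H \<and> feq U \<epsilon> (normF d P Q) (\<lambda>n. H n * A n)
                                 \<and> feq U \<epsilon> (normG d P Q) (\<lambda>n. H n * B n))"

definition maxcoef :: "nat filter \<Rightarrow> (nat \<Rightarrow> real) \<Rightarrow> nat \<Rightarrow> (nat \<Rightarrow> complex poly) \<Rightarrow> (nat \<Rightarrow> complex poly) \<Rightarrow> ereal" where
  "maxcoef U \<epsilon> d A B = Max ((\<lambda>k. hnorm U \<epsilon> (\<lambda>n. coeff (A n) k)) ` {..d}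
                          \<union> (\<lambda>k. hnorm U \<epsilon> (\<lambda>n. coeff (B n) k)) ` {..d})"

text \<open>|Res(g)| = |Res(A,B)| / max|coeff|^(2d) = 1.\<close>
definition good_red :: "nat filter \<Rightarrow> (nat \<Rightarrow> real) \<Rightarrow> nat \<Rightarrow> (nat \<Rightarrow> complex poly) \<Rightarrow> (nat \<Rightarrow> complex poly) \<Rightarrow> bool" where
  "good_red U \<epsilon> d A B \<longleftrightarrow> hnorm U \<epsilon> (\<lambda>n. hres d (A n) (B n)) = maxcoef U \<epsilon> d A B ^ (2*d)"

text \<open>Potential good reduction; by convention never over H_(1) = C.\<close>
definition pot_good_red :: "nat filter \<Rightarrow> (nat \<Rightarrow> real) \<Rightarrow> nat \<Rightarrow> (nat \<Rightarrow> complex poly) \<Rightarrow> (nat \<Rightarrow> complex poly) \<Rightarrow> bool" where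
  "pot_good_red U \<epsilon> d A B \<longleftrightarrow> \<not> scale_equiv U \<epsilon> one_scale \<and>
     (\<exists>N. mob_H U \<epsilon> N \<and> good_red U \<epsilon> d (conjF d N A B) (conjG d N A B))"

definition normalized_H :: "nat filter \<Rightarrow> (nat \<Rightarrow> real) \<Rightarrow> nat \<Rightarrow> (nat \<Rightarrow> complex poly) \<Rightarrow> (nat \<Rightarrow> complex poly) \<Rightarrow> bool" where
  "normalized_H U \<epsilon> d A B \<longleftrightarrow> maxcoef U \<epsilon> d A B = 1"

text \<open>For normalised [A:B] over H_eps (eps < (1)): g fixes the Gauss point x_g with local degree 1,
  i.e. the reduction [A~:B~] equals H~ * [a~:b~] with [a~:b~] of degree exactly 1.
  Residue field elements: z with |z| <= 1, z~ = 0 iff |z| < 1.\<close>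
definition fixes_gauss_ldeg1 :: "nat filter \<Rightarrow> (nat \<Rightarrow> real) \<Rightarrow> nat \<Rightarrow> (nat \<Rightarrow> complex poly) \<Rightarrow> (nat \<Rightarrow> complex poly) \<Rightarrow> bool" where
  "fixes_gauss_ldeg1 U \<epsilon> d A B \<longleftrightarrow> 1 \<le> d \<and>
     (\<exists>H a b. (\<forall>n. degree (H n) \<le> d - 1 \<and> degree (a n) \<le> 1 \<and> degree (b n) \<le> 1) \<and>
        (\<forall>k. hnorm U \<epsilon> (\<lambda>n. coeff (H n) k) \<le> 1 \<and> hnorm U \<epsilon> (\<lambda>n. coeff (a n) k) \<le> 1
             \<and> hnorm U \<epsilon> (\<lambda>n. coeff (b n) k) \<le> 1) \<and>
        (\<forall>k. hnorm U \<epsilon> (\<lambda>n. coeff (A n) k - coeff (H n * a n) k) < 1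
             \<and> hnorm U \<epsilon> (\<lambda>n. coeff (B n) k - coeff (H n * b n) k) < 1) \<and>
        hnorm U \<epsilon> (\<lambda>n. hres 1 (a n) (b n)) = 1)"

text \<open>Coordinates (x_n : y_n) with |x_n|,|y_n| <= 1, one of them of modulus 1: a point of
  P^1 of the residue field of H_eps (a direction at x_g), and also, via the canonical map,
  a point of P^1(H_eta).\<close>
definition dir_rep :: "(nat \<Rightarrow> complex) \<Rightarrow> (nat \<Rightarrow> complex) \<Rightarrow> bool" where
  "dir_rep x y \<longleftrightarrow> (\<forall>n. cmod (x n) \<le> 1 \<and> cmod (y n) \<le> 1 \<and> max (cmod (x n)) (cmod (y n)) = 1)"

text \<open>Bad direction at the fixed Gauss point for normalised [A:B]: a common zero of the
  reductions A~, B~ (a zero of their gcd).\<close>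
definition bad_dir :: "nat filter \<Rightarrow> (nat \<Rightarrow> real) \<Rightarrow> nat \<Rightarrow> (nat \<Rightarrow> complex poly) \<Rightarrow> (nat \<Rightarrow> complex poly)
    \<Rightarrow> (nat \<Rightarrow> complex) \<Rightarrow> (nat \<Rightarrow> complex) \<Rightarrow> bool" where
  "bad_dir U \<epsilon> d A B x y \<longleftrightarrow>
     hnorm U \<epsilon> (\<lambda>n. hform_eval d (A n) (x n) (y n)) < 1 \<and>
     hnorm U \<epsilon> (\<lambda>n. hform_eval d (B n) (x n) (y n)) < 1"

fun orbit_pt :: "nat \<Rightarrow> (nat \<Rightarrow> complex poly) \<Rightarrow> (nat \<Rightarrow> complex poly) \<Rightarrow> (nat \<Rightarrow> complex) \<Rightarrow> (nat \<Rightarrow> complex)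
    \<Rightarrow> nat \<Rightarrow> (nat \<Rightarrow> complex) \<times> (nat \<Rightarrow> complex)" where
  "orbit_pt d A B x y 0 = (x, y)"
| "orbit_pt d A B x y (Suc k) = (let p = orbit_pt d A B x y k in
      (\<lambda>n. hform_eval d (A n) (fst p n) (snd p n), \<lambda>n. hform_eval d (B n) (fst p n) (snd p n)))"

definition proj_eq :: "nat filter \<Rightarrow> (nat \<Rightarrow> real) \<Rightarrow> (nat \<Rightarrow> complex) \<times> (nat \<Rightarrow> complex)
    \<Rightarrow> (nat \<Rightarrow> complex) \<times> (nat \<Rightarrow> complex) \<Rightarrow> bool" where
  "proj_eq U \<eta> p q \<longleftrightarrow> hzero U \<eta> (\<lambda>n. fst p n * snd q n - snd p n * fst q n)"

definition infinite_orbit :: "nat filter \<Rightarrow> (nat \<Rightarrow> real) \<Rightarrow> nat \<Rightarrow> (nat \<Rightarrow> complex poly) \<Rightarrow> (nat \<Rightarrow> complex poly)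
    \<Rightarrow> (nat \<Rightarrow> complex) \<Rightarrow> (nat \<Rightarrow> complex) \<Rightarrow> bool" where
  "infinite_orbit U \<eta> d A B x y \<longleftrightarrow>
     (\<forall>j k. j < k \<longrightarrow> \<not> proj_eq U \<eta> (orbit_pt d A B x y j) (orbit_pt d A B x y k))"

definition g_rescaling :: "(nat \<Rightarrow> mob) \<Rightarrow> (nat \<Rightarrow> real) \<Rightarrow> bool" where
  "g_rescaling M \<eta> \<longleftrightarrow> complex_mob_seq M \<and> is_scale \<eta>"

definition adapted :: "nat filter \<Rightarrow> nat \<Rightarrow> (nat \<Rightarrow> complex poly) \<Rightarrow> (nat \<Rightarrow> complex poly)
    \<Rightarrow> (nat \<Rightarrow> mob) \<Rightarrow> (nat \<Rightarrow> real) \<Rightarrow> bool" where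
  "adapted U d P Q M \<eta> \<longleftrightarrow>
     (let F = conjF d M P Q; G = conjG d M P Q in
       \<comment> \<open>(A1)\<close>
       (\<exists>\<delta> A B. 1 \<le> \<delta> \<and> is_limit U \<eta> d F G \<delta> A B) \<and>
       \<comment> \<open>(A2)\<close>
       (scale_less U \<eta> one_scale \<longrightarrow>
          (\<forall>\<delta> A B. is_limit U \<eta> d F G \<delta> A B \<longrightarrow> \<not> pot_good_red U \<eta> \<delta> A B)) \<and>
       \<comment> \<open>(A3)\<close>
       (\<forall>A B. is_limit U \<eta> d F G 1 A B \<longrightarrow>
          (\<exists>\<epsilon>. is_scale \<epsilon> \<and> scale_less U \<epsilon> \<eta> \<and>
             (\<exists>\<delta>' A' B'. is_limit U \<epsilon> d F G \<delta>' A' B' \<and> normalized_H U \<epsilon> \<delta>' A' B' \<and>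
                fixes_gauss_ldeg1 U \<epsilon> \<delta>' A' B' \<and>
                (\<exists>x y. dir_rep x y \<and> bad_dir U \<epsilon> \<delta>' A' B' x y \<and> infinite_orbit U \<eta> 1 A B x y)))))"

end

(*
  Suppose eta is not equivalent to (1). Since eta is bounded, eta_n -> 0 along the ultrafilter, so
  the absolute value |z| = lim |z_n|^(eta_n) of H_eta is non-Archimedean and every nonzero complex
  constant has absolute value 1. Let the limit [A:B] of degree delta be conjugate by N to l [a:b]
  with a, b complex. A common zero (x:y) of a and b is mapped by the adjugate of N to a common zero
  of A and B in H_eta; Cramer's rule for the Sylvester matrix rules this out because
  Res(A,B) <> 0 in H_eta. So Res(a,b) is a nonzero complex number, whence the conjugate map has
  coefficients of maximal absolute value |l| and resultant of absolute value |l|^(2 delta): it has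
  good reduction, contradicting (A2).
*)

theory Submission
  imports Defs "HOL-Computational_Algebra.Fundamental_Theorem_Algebra"
    "HOL-Computational_Algebra.Field_as_Ring"
begin

lemma nonprincipal_ultrafilter_ne_bot: "nonprincipal_ultrafilter U \<Longrightarrow> U \<noteq> bot"
  unfolding nonprincipal_ultrafilter_def by auto

lemma nonprincipal_ultrafilter_eventually_or_not:
  assumes "nonprincipal_ultrafilter U"
  shows "eventually P U \<or> eventually (\<lambda>n. \<not> P n) U"
proof -
  have "eventually (\<lambda>n. n \<in> {n. P n}) U \<or> eventually (\<lambda>n. n \<notin> {n. P n}) U"
    using assms unfolding nonprincipal_ultrafilter_def by blast
  then show ?thesis by simp
qed

lemma ulim_tendsto:
  assumes U: "nonprincipal_ultrafilter U"
  shows "(x \<longlongrightarrow> ulim U x) U"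
proof -
  have "(x \<longlongrightarrow> Limsup U x) U"
  proof (rule order_tendstoI)
    fix y assume "y < Limsup U x"
    then have "\<not> eventually (\<lambda>n. x n \<le> y) U"
      using Limsup_bounded[of x y U] by auto
    then show "eventually (\<lambda>n. y < x n) U"
      using nonprincipal_ultrafilter_eventually_or_not[OF U, of "\<lambda>n. y < x n"] by (simp add: not_less)
  next
    fix y assume "Limsup U x < y"
    then show "eventually (\<lambda>n. x n < y) U" by (rule Limsup_lessD)
  qed
  then show ?thesis
    unfolding ulim_def using nonprincipal_ultrafilter_ne_bot[OF U] by (simp add: tendsto_Lim)
qed

lemma ulim_eqI: "nonprincipal_ultrafilter U \<Longrightarrow> (x \<longlongrightarrow> l) U \<Longrightarrow> ulim U x = l"
  unfolding ulim_def by (rule tendsto_Lim[OF nonprincipal_ultrafilter_ne_bot])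

lemma scale_less_one_scale_if_not_equiv:
  assumes U: "nonprincipal_ultrafilter U" and "is_scale \<eta>"
    and "\<not> scale_equiv U \<eta> one_scale"
  shows "scale_less U \<eta> one_scale"
proof -
  let ?x = "\<lambda>n. ereal (\<eta> n / one_scale n)"
  have lim: "(?x \<longlongrightarrow> ulim U ?x) U" by (rule ulim_tendsto[OF U])
  obtain C where "\<And>n. \<eta> n \<le> C" and "\<And>n. 0 < \<eta> n"
    using assms(2) unfolding is_scale_def bdd_above_def by auto
  have "ulim U ?x \<le> ereal C"
    by (rule tendsto_upperbound[OF lim _ nonprincipal_ultrafilter_ne_bot[OF U]])
      (simp add: one_scale_def \<open>\<And>n. \<eta> n \<le> C\<close>)
  moreover have "0 \<le> ulim U ?x"
    by (rule tendsto_lowerbound[OF lim _ nonprincipal_ultrafilter_ne_bot[OF U]])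
      (simp add: one_scale_def less_imp_le[OF \<open>\<And>n. 0 < \<eta> n\<close>])
  ultimately show ?thesis
    using assms(3) unfolding scale_equiv_def scale_less_def by (auto simp: le_less)
qed

lemma tendsto_0_if_scale_less_one_scale:
  assumes "nonprincipal_ultrafilter U" "scale_less U \<eta> one_scale"
  shows "(\<eta> \<longlongrightarrow> 0) U"
proof -
  have "((\<lambda>n. ereal (\<eta> n / one_scale n)) \<longlongrightarrow> 0) U"
    using ulim_tendsto[OF assms(1)] assms(2) unfolding scale_less_def by metis
  then show ?thesis by (simp add: one_scale_def zero_ereal_def)
qed

lemma hform_eval_add: "hform_eval d (p + q) x y = hform_eval d p x y + hform_eval d q x y"
  unfolding hform_eval_def coeff_add distrib_right sum.distrib ..

lemma hform_eval_smult: "hform_eval d (smult c p) x y = c * hform_eval d p x y"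
  unfolding hform_eval_def coeff_smult sum_distrib_left mult.assoc ..

lemma hform_eval_sum: "hform_eval d (\<Sum>i\<in>I. f i) x y = (\<Sum>i\<in>I. hform_eval d (f i) x y)"
  by (induction I rule: infinite_finite_induct) (simp_all add: hform_eval_add hform_eval_def[of _ 0])

lemma hform_eval_at_infinity: "hform_eval d p x 0 = coeff p d * x ^ d"
proof -
  have "hform_eval d p x 0 = (\<Sum>k\<in>{d}. coeff p k * x ^ k * 0 ^ (d - k))"
    unfolding hform_eval_def by (rule sum.mono_neutral_right) auto
  then show ?thesis by simp
qed

lemma hform_eval_dehomogenize:
  assumes "y \<noteq> 0" "degree p \<le> d"
  shows "hform_eval d p x y = y ^ d * poly p (x / y)"
proof -
  have "poly p (x / y) = (\<Sum>i\<le>d. coeff p i * (x / y) ^ i)"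
    unfolding poly_altdef
    by (rule sum.mono_neutral_left) (use assms(2) in \<open>auto dest: le_degree\<close>)
  then have "y ^ d * poly p (x / y) = (\<Sum>i\<le>d. coeff p i * (y ^ d * (x / y) ^ i))"
    by (simp add: sum_distrib_left algebra_simps)
  also have "\<dots> = (\<Sum>k\<le>d. coeff p k * x ^ k * y ^ (d - k))"
  proof (rule sum.cong[OF refl])
    fix i assume "i \<in> {..d}"
    then have "y ^ d = y ^ i * y ^ (d - i)" by (simp add: power_add[symmetric])
    then show "coeff p i * (y ^ d * (x / y) ^ i) = coeff p i * x ^ i * y ^ (d - i)"
      using assms(1) by (simp add: power_divide field_simps)
  qed
  finally show ?thesis unfolding hform_eval_def by simp
qed

lemma coeff_mult_at_degree_bounds:
  fixes p q :: "'a::idom poly"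
  assumes "degree p \<le> m" "degree q \<le> k"
  shows "coeff (p * q) (m + k) = coeff p m * coeff q k"
proof (cases "degree p = m \<and> degree q = k")
  case True
  then show ?thesis using coeff_mult_degree_sum[of p q] by simp
next
  case False
  then have "degree p < m \<or> degree q < k" using assms by auto
  moreover have "degree (p * q) \<le> degree p + degree q" by (rule degree_mult_le)
  ultimately show ?thesis
    using assms by (auto simp: coeff_eq_0)
qed

lemma hform_eval_mult:
  assumes "degree p \<le> m" "degree q \<le> k"
  shows "hform_eval (m + k) (p * q) x y = hform_eval m p x y * hform_eval k q x y"
proof (cases "y = 0")
  case True
  then show ?thesis
    by (simp add: hform_eval_at_infinity coeff_mult_at_degree_bounds[OF assms] power_add)
next
  case False
  have "degree (p * q) \<le> m + k" using degree_mult_le[of p q] assms by linarith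
  then show ?thesis
    using False assms by (simp add: hform_eval_dehomogenize power_add)
qed

lemma degree_power_le_exponent: "degree p \<le> 1 \<Longrightarrow> degree (p ^ k) \<le> k"
  using order_trans[OF degree_power_le, of p k k] by simp

lemma hform_eval_power:
  assumes "degree p \<le> 1"
  shows "hform_eval k (p ^ k) x y = hform_eval 1 p x y ^ k"
proof (induction k)
  case 0
  then show ?case by (simp add: hform_eval_def)
next
  case (Suc k)
  have "hform_eval (1 + k) (p * p ^ k) x y = hform_eval 1 p x y * hform_eval k (p ^ k) x y"
    using assms degree_power_le_exponent[OF assms] by (intro hform_eval_mult)
  then show ?case using Suc.IH by simp
qed

lemma hform_eval_subst:
  assumes "degree X \<le> 1" "degree Y \<le> 1"
  shows "hform_eval d (hform_subst d p X Y) x y =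
         hform_eval d p (hform_eval 1 X x y) (hform_eval 1 Y x y)"
proof -
  have "hform_eval d (X ^ k * Y ^ (d - k)) x y = hform_eval 1 X x y ^ k * hform_eval 1 Y x y ^ (d - k)"
    if "k \<le> d" for k
  proof -
    have "hform_eval d (X ^ k * Y ^ (d - k)) x y
        = hform_eval k (X ^ k) x y * hform_eval (d - k) (Y ^ (d - k)) x y"
      using hform_eval_mult[OF degree_power_le_exponent degree_power_le_exponent] assms that
      by (metis le_add_diff_inverse)
    then show ?thesis using assms by (simp add: hform_eval_power)
  qed
  then show ?thesis
    unfolding hform_subst_def hform_eval_sum hform_eval_smult
    by (auto simp: hform_eval_def mult.assoc intro: sum.cong)
qed

lemma hform_eval_subst_linear:
  "hform_eval d (hform_subst d p [:a, b:] [:c, e:]) x y = hform_eval d p (a * y + b * x) (c * y + e * x)"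
proof -
  have "degree [:a, b:] \<le> 1" "degree [:c, e:] \<le> 1" by (auto simp: degree_pCons_le)
  moreover have "hform_eval 1 [:a, b:] x y = a * y + b * x" "hform_eval 1 [:c, e:] x y = c * y + e * x"
    by (simp_all add: hform_eval_def atMost_Suc)
  ultimately show ?thesis using hform_eval_subst[of "[:a, b:]" "[:c, e:]" d p x y] by simp
qed

lemma hform_eval_conj_mob:
  fixes \<alpha> \<beta> \<gamma> \<epsilon> x y :: complex
  defines "x' \<equiv> \<epsilon> * x - \<beta> * y" and "y' \<equiv> \<alpha> * y - \<gamma> * x"
  shows "hform_eval d (fst (conj_mob d (\<alpha>, \<beta>, \<gamma>, \<epsilon>) P Q)) x y
           = \<alpha> * hform_eval d P x' y' + \<beta> * hform_eval d Q x' y'"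
    and "hform_eval d (snd (conj_mob d (\<alpha>, \<beta>, \<gamma>, \<epsilon>) P Q)) x y
           = \<gamma> * hform_eval d P x' y' + \<epsilon> * hform_eval d Q x' y'"
  by (simp_all add: conj_mob_def Let_def hform_eval_add hform_eval_smult hform_eval_subst_linear
      x'_def y'_def algebra_simps)

section \<open>Sylvester matrices and resultants\<close>

lemma sylvester_hom_carrier: "sylvester_hom d P Q \<in> carrier_mat (2*d) (2*d)"
  unfolding sylvester_hom_def by simp

lemma sylvester_hom_index:
  "i < 2*d \<Longrightarrow> j < 2*d \<Longrightarrow> sylvester_hom d P Q $$ (i,j) =
      (if i < d then (if i \<le> j \<and> j \<le> i + d then coeff P (d + i - j) else 0)
       else (if i - d \<le> j \<and> j \<le> i then coeff Q (i - j) else 0))"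
  unfolding sylvester_hom_def by simp

lemma hres_smult: "hres d (smult c P) (smult c Q) = c ^ (2 * d) * hres d P Q"
proof -
  have "sylvester_hom d (smult c P) (smult c Q) = c \<cdot>\<^sub>m sylvester_hom d P Q"
    unfolding sylvester_hom_def by (rule eq_matI) auto
  then show ?thesis unfolding hres_def by (simp add: sylvester_hom_def)
qed

lemma hres_0_0: "1 \<le> d \<Longrightarrow> hres d 0 0 = 0"
  using hres_smult[of d 0 0 0] by (cases d) auto

lemma hres_degree_0: "hres 0 P Q = 1"
proof -
  have "sylvester_hom 0 P Q \<in> carrier_mat 0 0" using sylvester_hom_carrier[of 0] by simp
  then show ?thesis unfolding hres_def by (simp add: det_def' permutes_empty sign_id)
qed

lemma sylvester_row_mult_monomials:
  assumes "i < d"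
  shows "(\<Sum>j<2*d. (if i \<le> j \<and> j \<le> i + d then coeff R (d + i - j) else 0) * (x^(2*d-1-j) * y^j))
       = x^(d-1-i) * y^i * hform_eval d R x y"
proof -
  have "(\<Sum>j<2*d. (if i \<le> j \<and> j \<le> i + d then coeff R (d + i - j) else 0) * (x^(2*d-1-j) * y^j))
      = (\<Sum>j\<in>{i..i+d}. coeff R (d + i - j) * (x^(2*d-1-j) * y^j))"
    using assms by (intro sum.mono_neutral_cong_right) auto
  also have "\<dots> = (\<Sum>k\<le>d. coeff R k * (x^(2*d-1-(i+d-k)) * y^(i+d-k)))"
    by (rule sum.reindex_bij_witness[of _ "\<lambda>k. i + d - k" "\<lambda>j. i + d - j"]) (auto simp: add.commute)
  also have "\<dots> = (\<Sum>k\<le>d. x^(d-1-i) * y^i * (coeff R k * x^k * y^(d-k)))"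
  proof (rule sum.cong[OF refl])
    fix k assume "k \<in> {..d}"
    then have e1: "2*d-1-(i+(d-k)) = (d-1-i) + k" and e2: "i+d-k = i + (d-k)" using assms by auto
    show "coeff R k * (x^(2*d-1-(i+d-k)) * y^(i+d-k)) = x^(d-1-i) * y^i * (coeff R k * x^k * y^(d-k))"
      unfolding e2 unfolding e1 power_add by (simp only: mult_ac)
  qed
  also have "\<dots> = x^(d-1-i) * y^i * hform_eval d R x y"
    unfolding hform_eval_def sum_distrib_left ..
  finally show ?thesis .
qed

lemma sylvester_hom_mult_monomials:
  assumes "i < 2*d"
  shows "(sylvester_hom d P Q *\<^sub>v vec (2*d) (\<lambda>j. x^(2*d-1-j) * y^j)) $ i =
    (if i < d then x^(d-1-i) * y^i * hform_eval d P x y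
     else x^(2*d-1-i) * y^(i-d) * hform_eval d Q x y)"
proof -
  have "(sylvester_hom d P Q *\<^sub>v vec (2*d) (\<lambda>j. x^(2*d-1-j) * y^j)) $ i
      = (\<Sum>j<2*d. sylvester_hom d P Q $$ (i,j) * (x^(2*d-1-j) * y^j))"
    using assms by (simp add: sylvester_hom_def scalar_prod_def atLeast0LessThan)
  also have "\<dots> = (if i < d then x^(d-1-i) * y^i * hform_eval d P x y
                   else x^(2*d-1-i) * y^(i-d) * hform_eval d Q x y)"
  proof (cases "i < d")
    case True
    then show ?thesis
      using sylvester_row_mult_monomials[OF True, of P x y] assms
      by (auto simp: sylvester_hom_index intro: sum.cong)
  next
    case False
    then obtain i' where i': "i = d + i'" "i' < d"
      using assms by (metis add_diff_inverse_nat add_less_imp_less_left mult_2)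
    then have "2*d-1-i = d-1-i'" by simp
    then show ?thesis
      using sylvester_row_mult_monomials[OF i'(2), of Q x y] i' assms
      by (auto simp: sylvester_hom_index add.commute intro!: sum.cong)
  qed
  finally show ?thesis .
qed

definition rev_coeffs_poly :: "nat \<Rightarrow> (nat \<Rightarrow> 'a::comm_semiring_1) \<Rightarrow> 'a poly" where
  "rev_coeffs_poly d c = (\<Sum>i<d. monom (c i) (d - 1 - i))"

lemma coeff_rev_coeffs_poly: "i < d \<Longrightarrow> coeff (rev_coeffs_poly d c) (d - 1 - i) = c i"
proof -
  assume "i < d"
  then have "(\<Sum>j<d. if d - 1 - j = d - 1 - i then c j else 0) = (\<Sum>j\<in>{i}. c j)"
    by (intro sum.mono_neutral_cong_right) auto
  then show ?thesis by (simp add: rev_coeffs_poly_def coeff_sum coeff_monom)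
qed

lemma degree_rev_coeffs_poly: "degree (rev_coeffs_poly d c) \<le> d - 1"
  unfolding rev_coeffs_poly_def
  by (rule degree_sum_le) (auto intro: order_trans[OF degree_monom_le])

lemma coeff_rev_coeffs_poly_mult:
  "coeff (rev_coeffs_poly d c * p) m =
     (\<Sum>i<d. if m < d - 1 - i then 0 else c i * coeff p (m - (d - 1 - i)))"
  by (simp only: rev_coeffs_poly_def sum_distrib_right coeff_sum coeff_monom_mult)

(* Row i < d of the Sylvester matrix lists the coefficients of X^(d-1-i) a from X^(2d-1) down,
   and row d + i those of X^(d-1-i) b. *)
lemma coeff_syzygy_eq_sylvester:
  fixes a b :: "complex poly" and w :: "complex vec"
  assumes "degree a \<le> d" "degree b \<le> d" "w \<in> carrier_vec (2*d)" "m < 2*d"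
  shows "coeff (rev_coeffs_poly d (\<lambda>i. w $ i) * a + rev_coeffs_poly d (\<lambda>i. w $ (d + i)) * b) m
       = (transpose_mat (sylvester_hom d a b) *\<^sub>v w) $ (2*d-1-m)"
proof -
  let ?S = "sylvester_hom d a b" and ?j = "2*d-1-m"
  have shifted: "(if m < d - 1 - i then 0 else c * coeff p (m - (d - 1 - i))) =
      (if i \<le> ?j \<and> ?j \<le> i + d then coeff p (d + i - ?j) * c else 0)"
    if "degree p \<le> d" "i < d" for p :: "complex poly" and i c
  proof (cases "m < d - 1 - i")
    case False
    then have "m - (d - 1 - i) = d + i - ?j" using assms(4) that(2) by auto
    moreover have "coeff p (m - (d - 1 - i)) = 0" if "\<not> i \<le> ?j"
    proof -
      have "d < m - (d - 1 - i)" using that False assms(4) \<open>i < d\<close> by auto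
      then show ?thesis using \<open>degree p \<le> d\<close> by (intro coeff_eq_0) simp
    qed
    ultimately show ?thesis using False assms(4) by auto
  qed (use assms(4) in auto)
  have "(transpose_mat ?S *\<^sub>v w) $ ?j = (\<Sum>i<2*d. ?S $$ (i, ?j) * w $ i)"
    using assms(3,4) by (simp add: sylvester_hom_def scalar_prod_def mult.commute atLeast0LessThan)
  also have "\<dots> = (\<Sum>i<d. ?S $$ (i, ?j) * w $ i) + (\<Sum>i<d. ?S $$ (i + d, ?j) * w $ (i + d))"
    using sum.atLeastLessThan_concat[of 0 d "2*d" "\<lambda>i. ?S $$ (i, ?j) * w $ i"]
      sum.shift_bounds_nat_ivl[of "\<lambda>i. ?S $$ (i, ?j) * w $ i" 0 d d]
    by (simp add: atLeast0LessThan mult_2)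
  also have "(\<Sum>i<d. ?S $$ (i, ?j) * w $ i) = coeff (rev_coeffs_poly d (\<lambda>i. w $ i) * a) m"
    unfolding coeff_rev_coeffs_poly_mult
    using shifted[OF assms(1)] assms(4) by (auto simp: sylvester_hom_index intro!: sum.cong)
  also have "(\<Sum>i<d. ?S $$ (i + d, ?j) * w $ (i + d))
      = coeff (rev_coeffs_poly d (\<lambda>i. w $ (d + i)) * b) m"
    unfolding coeff_rev_coeffs_poly_mult
    using shifted[OF assms(2)] assms(4) by (auto simp: sylvester_hom_index add.commute intro!: sum.cong)
  finally show ?thesis by simp
qed

lemma hres_eq_0_imp_syzygy:
  fixes a b :: "complex poly"
  assumes "1 \<le> d" "degree a \<le> d" "degree b \<le> d" "hres d a b = 0"
  obtains u v where "u \<noteq> 0 \<or> v \<noteq> 0" "degree u < d" "degree v < d" "u * a + v * b = 0"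
proof -
  let ?S = "sylvester_hom d a b"
  have "det (transpose_mat ?S) = 0"
    using assms(4) det_transpose[OF sylvester_hom_carrier] unfolding hres_def by simp
  then obtain w where w: "w \<in> carrier_vec (2*d)" "w \<noteq> 0\<^sub>v (2*d)" "transpose_mat ?S *\<^sub>v w = 0\<^sub>v (2*d)"
    using det_0_iff_vec_prod_zero[of "transpose_mat ?S" "2*d"] sylvester_hom_carrier by auto
  define u where "u = rev_coeffs_poly d (\<lambda>i. w $ i)"
  define v where "v = rev_coeffs_poly d (\<lambda>i. w $ (d + i))"
  have "u \<noteq> 0 \<or> v \<noteq> 0"
  proof (rule ccontr)
    assume "\<not> (u \<noteq> 0 \<or> v \<noteq> 0)"
    then have "w $ i = 0" if "i < 2*d" for i
    proof (cases "i < d")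
      case True
      then show ?thesis using coeff_rev_coeffs_poly[OF True, of "\<lambda>i. w $ i"] \<open>\<not> (u \<noteq> 0 \<or> v \<noteq> 0)\<close>
        by (simp add: u_def)
    next
      case False
      then have "i - d < d" "d + (i - d) = i" using that by auto
      then show ?thesis using coeff_rev_coeffs_poly[of "i - d" d "\<lambda>i. w $ (d + i)"] \<open>\<not> (u \<noteq> 0 \<or> v \<noteq> 0)\<close>
        by (simp add: v_def)
    qed
    then have "w = 0\<^sub>v (2*d)" using w(1) by (intro eq_vecI) auto
    with w(2) show False ..
  qed
  moreover have "degree u < d" "degree v < d"
    using le_less_trans[OF degree_rev_coeffs_poly, of d d] assms(1) unfolding u_def v_def by simp_all
  moreover have "u * a + v * b = 0"
  proof (rule poly_eqI)
    fix m
    show "coeff (u * a + v * b) m = coeff 0 m"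
    proof (cases "m < 2*d")
      case True
      then show ?thesis
        using coeff_syzygy_eq_sylvester[OF assms(2,3) w(1) True] w(3) by (simp add: u_def v_def)
    next
      case False
      have "degree (u * a) < m" "degree (v * b) < m"
        using degree_mult_le[of u a] degree_mult_le[of v b] \<open>degree u < d\<close> \<open>degree v < d\<close>
          assms(2,3) False
        by linarith+
      then show ?thesis by (simp add: coeff_eq_0)
    qed
  qed
  ultimately show ?thesis using that by blast
qed

lemma coprime_if_no_common_root:
  fixes p q :: "complex poly"
  assumes "\<nexists>z. poly p z = 0 \<and> poly q z = 0"
  shows "coprime p q"
proof -
  let ?g = "gcd p q"
  have "?g \<noteq> 0" using assms by auto
  moreover have "degree ?g = 0"
  proof (rule ccontr)
    assume "degree ?g \<noteq> 0"
    then have "\<not> constant (poly ?g)" by (simp add: constant_degree)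
    then obtain z where "poly ?g z = 0" using fundamental_theorem_of_algebra by blast
    then have "poly p z = 0" "poly q z = 0"
      by (meson dvd_trans gcd_dvd1 gcd_dvd2 poly_eq_0_iff_dvd)+
    with assms show False by blast
  qed
  ultimately show ?thesis using is_unit_iff_degree is_unit_gcd by blast
qed

lemma common_root_if_syzygy:
  fixes a b u v :: "complex poly"
  assumes "u * a + v * b = 0" "degree v < degree a" "u \<noteq> 0 \<or> v \<noteq> 0"
  shows "\<exists>z. poly a z = 0 \<and> poly b z = 0"
proof (rule ccontr)
  assume "\<nexists>z. poly a z = 0 \<and> poly b z = 0"
  then have "coprime a b" by (rule coprime_if_no_common_root)
  have "a \<noteq> 0" using assms(2) by auto
  have "v \<noteq> 0" using assms \<open>a \<noteq> 0\<close> by auto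
  have "v * b = a * (- u)"
    using assms(1) by (simp add: algebra_simps eq_neg_iff_add_eq_0 add.commute)
  then have "a dvd v * b" by simp
  then have "a dvd v" using \<open>coprime a b\<close> by (simp add: coprime_dvd_mult_left_iff)
  then have "degree a \<le> degree v" using \<open>v \<noteq> 0\<close> by (rule dvd_imp_degree_le)
  with assms(2) show False by simp
qed

lemma hres_eq_0_imp_common_zero:
  fixes a b :: "complex poly"
  assumes "1 \<le> d" "degree a \<le> d" "degree b \<le> d" "hres d a b = 0"
  obtains x y where "x \<noteq> 0 \<or> y \<noteq> 0" "hform_eval d a x y = 0" "hform_eval d b x y = 0"
proof (cases "coeff a d = 0 \<and> coeff b d = 0")
  case True
  then show ?thesis using that[of 1 0] by (simp add: hform_eval_at_infinity)
next
  case False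
  then have "degree a = d \<or> degree b = d"
    using assms(2,3) le_degree by (metis antisym)
  moreover obtain u v where "u \<noteq> 0 \<or> v \<noteq> 0" "degree u < d" "degree v < d" "u * a + v * b = 0"
    using hres_eq_0_imp_syzygy[OF assms] .
  ultimately obtain z where "poly a z = 0" "poly b z = 0"
    using common_root_if_syzygy[of u a v b] common_root_if_syzygy[of v b u a]
    by (auto simp: add.commute)
  then show ?thesis using that[of z 1] assms(2,3) by (simp add: hform_eval_dehomogenize)
qed

section \<open>The field H_eta for a scale tending to 0\<close>

lemma norm_add_powr_le:
  fixes z w :: "'a::real_normed_vector"
  assumes "0 < e"
  shows "norm (z + w) powr e \<le> 2 powr e * max (norm z powr e) (norm w powr e)"
proof -
  have "norm (z + w) \<le> 2 * max (norm z) (norm w)"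
    using norm_triangle_ineq[of z w] by linarith
  then have "norm (z + w) powr e \<le> (2 * max (norm z) (norm w)) powr e"
    using assms by (intro powr_mono2) auto
  also have "\<dots> = 2 powr e * max (norm z powr e) (norm w powr e)"
  proof (cases "norm z \<le> norm w")
    case True
    then show ?thesis using assms powr_mono2[of e "norm z" "norm w"] by (simp add: powr_mult max_def)
  next
    case False
    then show ?thesis using assms powr_mono2[of e "norm w" "norm z"] by (simp add: powr_mult max_def)
  qed
  finally show ?thesis .
qed

locale vanishing_scale =
  fixes U :: "nat filter" and \<eta> :: "nat \<Rightarrow> real"
  assumes ultrafilter: "nonprincipal_ultrafilter U"
    and scale_pos: "0 < \<eta> n"
    and scale_tendsto_0: "(\<eta> \<longlongrightarrow> 0) U"
begin

lemma ne_bot: "U \<noteq> bot"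
  using ultrafilter by (rule nonprincipal_ultrafilter_ne_bot)

definition has_abs :: "(nat \<Rightarrow> complex) \<Rightarrow> real \<Rightarrow> bool" where
  "has_abs z r \<longleftrightarrow> ((\<lambda>n. cmod (z n) powr \<eta> n) \<longlongrightarrow> r) U"

lemma has_abs_nonneg: "has_abs z r \<Longrightarrow> 0 \<le> r"
  unfolding has_abs_def by (rule tendsto_lowerbound[OF _ _ ne_bot]) auto

lemma has_abs_unique: "has_abs z r \<Longrightarrow> has_abs z s \<Longrightarrow> r = s"
  unfolding has_abs_def using tendsto_unique[OF ne_bot] by blast

lemma hval_eq_if_has_abs: "has_abs z r \<Longrightarrow> hval U \<eta> z = ereal r"
  unfolding has_abs_def hval_def by (rule ulim_eqI[OF ultrafilter]) simp

lemma hnorm_eq_hval: "hnorm U \<eta> z = hval U \<eta> z"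
  unfolding hnorm_def hval_def ulim_def
proof (rule Lim_cong)
  have "eventually (\<lambda>n. \<eta> n < 1) U"
    using scale_tendsto_0 by (rule order_tendstoD) simp
  then show "\<forall>\<^sub>F n in U. ereal (cmod (z n) powr min 1 (\<eta> n)) = ereal (cmod (z n) powr \<eta> n)"
    by eventually_elim simp
qed simp

lemma in_H_iff_has_abs: "in_H U \<eta> z \<longleftrightarrow> (\<exists>r. has_abs z r)"
proof
  assume "in_H U \<eta> z"
  let ?x = "\<lambda>n. ereal (cmod (z n) powr \<eta> n)"
  have lim: "(?x \<longlongrightarrow> hval U \<eta> z) U" unfolding hval_def by (rule ulim_tendsto[OF ultrafilter])
  have "0 \<le> hval U \<eta> z" by (rule tendsto_lowerbound[OF lim _ ne_bot]) simp
  with \<open>in_H U \<eta> z\<close> obtain r where "hval U \<eta> z = ereal r"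
    unfolding in_H_def by (cases "hval U \<eta> z") auto
  then show "\<exists>r. has_abs z r" using lim unfolding has_abs_def by auto
next
  assume "\<exists>r. has_abs z r"
  then show "in_H U \<eta> z" unfolding in_H_def using hval_eq_if_has_abs by auto
qed

lemma hzero_iff_has_abs: "hzero U \<eta> z \<longleftrightarrow> has_abs z 0"
proof
  assume "hzero U \<eta> z"
  then have "((\<lambda>n. ereal (cmod (z n) powr \<eta> n)) \<longlongrightarrow> 0) U"
    using ulim_tendsto[OF ultrafilter, of "\<lambda>n. ereal (cmod (z n) powr \<eta> n)"]
    unfolding hzero_def hval_def by simp
  then have "((\<lambda>n. ereal (cmod (z n) powr \<eta> n)) \<longlongrightarrow> ereal 0) U"
    by (simp add: zero_ereal_def)
  then show "has_abs z 0" unfolding has_abs_def by simp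
next
  assume "has_abs z 0"
  then show "hzero U \<eta> z" unfolding hzero_def using hval_eq_if_has_abs by (simp add: zero_ereal_def)
qed

lemma in_H_if_hzero: "hzero U \<eta> z \<Longrightarrow> in_H U \<eta> z"
  unfolding hzero_iff_has_abs in_H_iff_has_abs by blast

lemma in_H_if_eventually_bounded:
  assumes "eventually (\<lambda>n. cmod (z n) powr \<eta> n \<le> C) U"
  shows "in_H U \<eta> z"
proof -
  have "hval U \<eta> z \<le> ereal C"
    unfolding hval_def
    by (rule tendsto_upperbound[OF ulim_tendsto[OF ultrafilter] _ ne_bot])
      (use assms in \<open>auto elim: eventually_mono\<close>)
  then show ?thesis unfolding in_H_def by (rule le_less_trans) simp
qed

lemma eventually_bounded_if_in_H:
  assumes "in_H U \<eta> z"
  obtains C where "eventually (\<lambda>n. cmod (z n) powr \<eta> n \<le> C) U"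
proof -
  obtain r where "has_abs z r" using assms in_H_iff_has_abs by auto
  then have "eventually (\<lambda>n. cmod (z n) powr \<eta> n < r + 1) U"
    unfolding has_abs_def by (rule order_tendstoD) simp
  then have "eventually (\<lambda>n. cmod (z n) powr \<eta> n \<le> r + 1) U"
    by (rule eventually_mono) simp
  then show ?thesis by (rule that)
qed

lemma has_abs_const: "has_abs (\<lambda>n. c) (if c = 0 then 0 else 1)"
proof (cases "c = 0")
  case True
  then show ?thesis unfolding has_abs_def by simp
next
  case False
  have "((\<lambda>n. cmod c powr \<eta> n) \<longlongrightarrow> cmod c powr 0) U"
    using False scale_tendsto_0 by (intro tendsto_powr) auto
  then show ?thesis using False unfolding has_abs_def by simp
qed

lemma in_H_const: "in_H U \<eta> (\<lambda>n. c)"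
  using has_abs_const in_H_iff_has_abs by blast

lemma hzero_const_iff: "hzero U \<eta> (\<lambda>n. c) \<longleftrightarrow> c = 0"
  using has_abs_const[of c] has_abs_unique[of "\<lambda>n. c" 0 1]
  unfolding hzero_iff_has_abs by (cases "c = 0") auto

lemma has_abs_mult: "has_abs z r \<Longrightarrow> has_abs w s \<Longrightarrow> has_abs (\<lambda>n. z n * w n) (r * s)"
  unfolding has_abs_def by (simp add: norm_mult powr_mult tendsto_mult)

lemma has_abs_power: "has_abs z r \<Longrightarrow> has_abs (\<lambda>n. z n ^ m) (r ^ m)"
  by (induction m) (use has_abs_const[of 1] has_abs_mult in auto)

lemma has_abs_uminus_iff: "has_abs (\<lambda>n. - z n) r \<longleftrightarrow> has_abs z r"
  unfolding has_abs_def by simp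

lemma in_H_mult: "in_H U \<eta> z \<Longrightarrow> in_H U \<eta> w \<Longrightarrow> in_H U \<eta> (\<lambda>n. z n * w n)"
  unfolding in_H_iff_has_abs using has_abs_mult by blast

lemma in_H_power: "in_H U \<eta> z \<Longrightarrow> in_H U \<eta> (\<lambda>n. z n ^ m)"
  unfolding in_H_iff_has_abs using has_abs_power by blast

lemma in_H_uminus_iff: "in_H U \<eta> (\<lambda>n. - z n) \<longleftrightarrow> in_H U \<eta> z"
  unfolding in_H_iff_has_abs has_abs_uminus_iff ..

lemma hzero_uminus_iff: "hzero U \<eta> (\<lambda>n. - z n) \<longleftrightarrow> hzero U \<eta> z"
  unfolding hzero_iff_has_abs has_abs_uminus_iff ..

lemma hzero_mult_iff:
  assumes "in_H U \<eta> z" "in_H U \<eta> w"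
  shows "hzero U \<eta> (\<lambda>n. z n * w n) \<longleftrightarrow> hzero U \<eta> z \<or> hzero U \<eta> w"
proof -
  obtain r s where r: "has_abs z r" and s: "has_abs w s" using assms in_H_iff_has_abs by auto
  have rs: "has_abs (\<lambda>n. z n * w n) (r * s)" using r s by (rule has_abs_mult)
  have "hzero U \<eta> (\<lambda>n. z n * w n) \<longleftrightarrow> r * s = 0"
    unfolding hzero_iff_has_abs using rs has_abs_unique by metis
  also have "\<dots> \<longleftrightarrow> hzero U \<eta> z \<or> hzero U \<eta> w"
    unfolding hzero_iff_has_abs using r s has_abs_unique by (metis mult_eq_0_iff)
  finally show ?thesis .
qed

lemma hzero_mult_left: "hzero U \<eta> z \<Longrightarrow> in_H U \<eta> w \<Longrightarrow> hzero U \<eta> (\<lambda>n. z n * w n)"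
  using hzero_mult_iff in_H_if_hzero by blast

lemma hzero_mult_right: "in_H U \<eta> z \<Longrightarrow> hzero U \<eta> w \<Longrightarrow> hzero U \<eta> (\<lambda>n. z n * w n)"
  using hzero_mult_iff in_H_if_hzero by blast

lemma hzero_power_iff:
  assumes "in_H U \<eta> z" "0 < m"
  shows "hzero U \<eta> (\<lambda>n. z n ^ m) \<longleftrightarrow> hzero U \<eta> z"
proof -
  obtain r where r: "has_abs z r" using assms(1) in_H_iff_has_abs by auto
  then have "has_abs (\<lambda>n. z n ^ m) (r ^ m)" by (rule has_abs_power)
  then show ?thesis
    unfolding hzero_iff_has_abs using r has_abs_unique assms(2) by (metis power_eq_0_iff zero_power)
qed

lemma in_H_add:
  assumes "in_H U \<eta> z" "in_H U \<eta> w"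
  shows "in_H U \<eta> (\<lambda>n. z n + w n)"
proof -
  obtain C\<^sub>1 C\<^sub>2 where "eventually (\<lambda>n. cmod (z n) powr \<eta> n \<le> C\<^sub>1) U"
    and "eventually (\<lambda>n. cmod (w n) powr \<eta> n \<le> C\<^sub>2) U"
    using eventually_bounded_if_in_H assms by metis
  moreover have "eventually (\<lambda>n. \<eta> n < 1) U"
    using scale_tendsto_0 by (rule order_tendstoD) simp
  ultimately have "eventually (\<lambda>n. cmod (z n + w n) powr \<eta> n \<le> 2 * max C\<^sub>1 C\<^sub>2) U"
  proof eventually_elim
    case (elim n)
    have "cmod (z n + w n) powr \<eta> n \<le> 2 powr \<eta> n * max (cmod (z n) powr \<eta> n) (cmod (w n) powr \<eta> n)"
      by (rule norm_add_powr_le[OF scale_pos])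
    also have "\<dots> \<le> 2 * max C\<^sub>1 C\<^sub>2"
      using elim powr_mono[of "\<eta> n" 1 2] by (intro mult_mono) (auto simp: le_max_iff_disj)
    finally show ?case .
  qed
  then show ?thesis by (rule in_H_if_eventually_bounded)
qed

text \<open>The absolute value of \<open>H\<^sub>\<eta>\<close> is non-Archimedean: the factor \<open>2 powr \<eta> n\<close> of the
  triangle inequality tends to \<open>1\<close>.\<close>
lemma has_abs_add_le:
  assumes "has_abs z r" "has_abs w s" "has_abs (\<lambda>n. z n + w n) t"
  shows "t \<le> max r s"
proof -
  have "((\<lambda>n. 2 powr \<eta> n) \<longlongrightarrow> 2 powr 0) U"
    using scale_tendsto_0 by (intro tendsto_powr) auto
  then have "((\<lambda>n. 2 powr \<eta> n * max (cmod (z n) powr \<eta> n) (cmod (w n) powr \<eta> n)) \<longlongrightarrow> 1 * max r s) U"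
    using assms(1,2) unfolding has_abs_def by (intro tendsto_mult tendsto_max) simp_all
  moreover have "\<forall>n. cmod (z n + w n) powr \<eta> n
      \<le> 2 powr \<eta> n * max (cmod (z n) powr \<eta> n) (cmod (w n) powr \<eta> n)"
    using norm_add_powr_le[OF scale_pos] by blast
  ultimately show ?thesis
    using tendsto_le[OF ne_bot _ assms(3)[unfolded has_abs_def]] always_eventually by fastforce
qed

lemma hzero_add:
  assumes "hzero U \<eta> z" "hzero U \<eta> w"
  shows "hzero U \<eta> (\<lambda>n. z n + w n)"
proof -
  obtain t where t: "has_abs (\<lambda>n. z n + w n) t"
    using in_H_add[OF in_H_if_hzero in_H_if_hzero] assms in_H_iff_has_abs by blast
  then have "t \<le> max 0 0"
    using assms unfolding hzero_iff_has_abs by (intro has_abs_add_le)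
  then show ?thesis using t has_abs_nonneg[OF t] unfolding hzero_iff_has_abs by simp
qed

lemma in_H_diff: "in_H U \<eta> z \<Longrightarrow> in_H U \<eta> w \<Longrightarrow> in_H U \<eta> (\<lambda>n. z n - w n)"
  using in_H_add[of z "\<lambda>n. - w n"] by (simp add: in_H_uminus_iff)

lemma hzero_diff: "hzero U \<eta> z \<Longrightarrow> hzero U \<eta> w \<Longrightarrow> hzero U \<eta> (\<lambda>n. z n - w n)"
  using hzero_add[of z "\<lambda>n. - w n"] by (simp add: hzero_uminus_iff)

lemma heq_refl: "heq U \<eta> z z"
  unfolding heq_def using hzero_const_iff[of 0] by simp

lemma heq_sym: "heq U \<eta> z w \<Longrightarrow> heq U \<eta> w z"
  unfolding heq_def using hzero_uminus_iff[of "\<lambda>n. z n - w n"] by simp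

lemma heq_add:
  "heq U \<eta> z z' \<Longrightarrow> heq U \<eta> w w' \<Longrightarrow> heq U \<eta> (\<lambda>n. z n + w n) (\<lambda>n. z' n + w' n)"
  unfolding heq_def using hzero_add[of "\<lambda>n. z n - z' n" "\<lambda>n. w n - w' n"]
  by (simp add: algebra_simps)

lemma heq_mult:
  assumes "heq U \<eta> z z'" "heq U \<eta> w w'" "in_H U \<eta> z'" "in_H U \<eta> w"
  shows "heq U \<eta> (\<lambda>n. z n * w n) (\<lambda>n. z' n * w' n)"
proof -
  have "hzero U \<eta> (\<lambda>n. (z n - z' n) * w n + z' n * (w n - w' n))"
    using assms unfolding heq_def by (intro hzero_add hzero_mult_left hzero_mult_right)
  then show ?thesis unfolding heq_def by (simp add: algebra_simps)
qed

lemma in_H_if_heq: "heq U \<eta> z w \<Longrightarrow> in_H U \<eta> w \<Longrightarrow> in_H U \<eta> z"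
  unfolding heq_def using in_H_add[of "\<lambda>n. z n - w n" w] in_H_if_hzero by simp

lemma has_abs_if_heq:
  assumes "heq U \<eta> z w" "has_abs w s"
  shows "has_abs z s"
proof -
  obtain r where r: "has_abs z r"
    using in_H_if_heq[OF assms(1)] assms(2) in_H_iff_has_abs by blast
  have "r \<le> max s 0"
    using has_abs_add_le[of w s "\<lambda>n. z n - w n" 0] assms r
    unfolding heq_def hzero_iff_has_abs by simp
  moreover have "s \<le> max r 0"
    using has_abs_add_le[of z r "\<lambda>n. w n - z n" 0] assms r heq_sym[OF assms(1)]
    unfolding heq_def hzero_iff_has_abs by simp
  ultimately show ?thesis
    using r has_abs_nonneg[OF r] has_abs_nonneg[OF assms(2)] by simp
qed

lemma in_H_sum: "(\<And>i. i \<in> I \<Longrightarrow> in_H U \<eta> (f i)) \<Longrightarrow> in_H U \<eta> (\<lambda>n. \<Sum>i\<in>I. f i n)"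
  by (induction I rule: infinite_finite_induct) (auto intro: in_H_add in_H_const)

lemma in_H_prod: "(\<And>i. i \<in> I \<Longrightarrow> in_H U \<eta> (f i)) \<Longrightarrow> in_H U \<eta> (\<lambda>n. \<Prod>i\<in>I. f i n)"
  by (induction I rule: infinite_finite_induct) (auto intro: in_H_mult in_H_const)

lemma heq_sum:
  "(\<And>i. i \<in> I \<Longrightarrow> heq U \<eta> (f i) (g i)) \<Longrightarrow> heq U \<eta> (\<lambda>n. \<Sum>i\<in>I. f i n) (\<lambda>n. \<Sum>i\<in>I. g i n)"
  by (induction I rule: infinite_finite_induct) (auto intro: heq_add heq_refl)

lemma heq_prod:
  assumes "\<And>i. i \<in> I \<Longrightarrow> in_H U \<eta> (g i)" "\<And>i. i \<in> I \<Longrightarrow> heq U \<eta> (f i) (g i)"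
  shows "heq U \<eta> (\<lambda>n. \<Prod>i\<in>I. f i n) (\<lambda>n. \<Prod>i\<in>I. g i n)"
  using assms
proof (induction I rule: infinite_finite_induct)
  case (insert i I)
  have "in_H U \<eta> (\<lambda>n. \<Prod>i\<in>I. f i n)"
    using insert.prems by (intro in_H_prod) (auto intro: in_H_if_heq)
  then show ?case using insert by (auto intro: heq_mult)
qed (auto intro: heq_refl)

lemma in_H_det:
  assumes "\<And>n. M n \<in> carrier_mat m m" "\<And>i j. i < m \<Longrightarrow> j < m \<Longrightarrow> in_H U \<eta> (\<lambda>n. M n $$ (i, j))"
  shows "in_H U \<eta> (\<lambda>n. det (M n))"
proof -
  have "in_H U \<eta> (\<lambda>n. \<Sum>p\<in>{p. p permutes {0..<m}}. signof p * (\<Prod>i = 0..<m. M n $$ (i, p i)))"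
    using assms(2) by (intro in_H_sum in_H_mult in_H_const in_H_prod) (auto simp: permutes_in_image)
  then show ?thesis by (simp add: det_def'[OF assms(1)])
qed

lemma heq_det:
  assumes "\<And>n. M n \<in> carrier_mat m m" "\<And>n. M' n \<in> carrier_mat m m"
    and "\<And>i j. i < m \<Longrightarrow> j < m \<Longrightarrow> in_H U \<eta> (\<lambda>n. M' n $$ (i, j))"
    and "\<And>i j. i < m \<Longrightarrow> j < m \<Longrightarrow> heq U \<eta> (\<lambda>n. M n $$ (i, j)) (\<lambda>n. M' n $$ (i, j))"
  shows "heq U \<eta> (\<lambda>n. det (M n)) (\<lambda>n. det (M' n))"
proof -
  have M: "in_H U \<eta> (\<lambda>n. M n $$ (i, j))" if "i < m" "j < m" for i j
    using in_H_if_heq[OF assms(4)[OF that] assms(3)[OF that]] .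
  have "heq U \<eta> (\<lambda>n. \<Sum>p\<in>{p. p permutes {0..<m}}. signof p * (\<Prod>i = 0..<m. M n $$ (i, p i)))
                (\<lambda>n. \<Sum>p\<in>{p. p permutes {0..<m}}. signof p * (\<Prod>i = 0..<m. M' n $$ (i, p i)))"
  proof (rule heq_sum)
    fix p assume "p \<in> {p. p permutes {0..<m}}"
    then have "\<And>i. i < m \<Longrightarrow> p i < m" by (simp add: permutes_in_image)
    then have "heq U \<eta> (\<lambda>n. \<Prod>i = 0..<m. M n $$ (i, p i)) (\<lambda>n. \<Prod>i = 0..<m. M' n $$ (i, p i))"
      and "in_H U \<eta> (\<lambda>n. \<Prod>i = 0..<m. M n $$ (i, p i))"
      using assms(3,4) M by (auto intro!: heq_prod in_H_prod)
    then show "heq U \<eta> (\<lambda>n. signof p * (\<Prod>i = 0..<m. M n $$ (i, p i)))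
                        (\<lambda>n. signof p * (\<Prod>i = 0..<m. M' n $$ (i, p i)))"
      by (intro heq_mult heq_refl in_H_const)
  qed
  then show ?thesis by (simp add: det_def'[OF assms(1)] det_def'[OF assms(2)])
qed

lemma in_H_hform_eval:
  assumes "\<And>k. in_H U \<eta> (\<lambda>n. coeff (P n) k)" "in_H U \<eta> x" "in_H U \<eta> y"
  shows "in_H U \<eta> (\<lambda>n. hform_eval d (P n) (x n) (y n))"
  unfolding hform_eval_def using assms by (intro in_H_sum in_H_mult in_H_power)

lemma heq_hform_eval:
  assumes "\<And>k. in_H U \<eta> (\<lambda>n. coeff (Q n) k)"
    and "\<And>k. heq U \<eta> (\<lambda>n. coeff (P n) k) (\<lambda>n. coeff (Q n) k)"
    and "in_H U \<eta> x" "in_H U \<eta> y"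
  shows "heq U \<eta> (\<lambda>n. hform_eval d (P n) (x n) (y n)) (\<lambda>n. hform_eval d (Q n) (x n) (y n))"
  unfolding hform_eval_def
proof (rule heq_sum)
  fix k
  have "heq U \<eta> (\<lambda>n. coeff (P n) k * (x n ^ k * y n ^ (d - k)))
                (\<lambda>n. coeff (Q n) k * (x n ^ k * y n ^ (d - k)))"
    using assms by (intro heq_mult heq_refl in_H_mult in_H_power)
  then show "heq U \<eta> (\<lambda>n. coeff (P n) k * x n ^ k * y n ^ (d - k))
                     (\<lambda>n. coeff (Q n) k * x n ^ k * y n ^ (d - k))"
    by (simp add: mult.assoc)
qed

lemma in_H_sylvester_hom:
  assumes "\<And>k. in_H U \<eta> (\<lambda>n. coeff (P n) k)" "\<And>k. in_H U \<eta> (\<lambda>n. coeff (Q n) k)"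
    and "i < 2*d" "j < 2*d"
  shows "in_H U \<eta> (\<lambda>n. sylvester_hom d (P n) (Q n) $$ (i, j))"
  using assms
  by (cases "i < d"; cases "i \<le> j \<and> j \<le> i + d"; cases "i - d \<le> j \<and> j \<le> i")
    (simp_all add: sylvester_hom_index in_H_const)

lemma in_H_hres:
  assumes "\<And>k. in_H U \<eta> (\<lambda>n. coeff (P n) k)" "\<And>k. in_H U \<eta> (\<lambda>n. coeff (Q n) k)"
  shows "in_H U \<eta> (\<lambda>n. hres d (P n) (Q n))"
  unfolding hres_def using assms by (intro in_H_det[OF sylvester_hom_carrier] in_H_sylvester_hom)

lemma heq_hres:
  assumes "\<And>k. in_H U \<eta> (\<lambda>n. coeff (P' n) k)" "\<And>k. in_H U \<eta> (\<lambda>n. coeff (Q' n) k)"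
    and "\<And>k. heq U \<eta> (\<lambda>n. coeff (P n) k) (\<lambda>n. coeff (P' n) k)"
    and "\<And>k. heq U \<eta> (\<lambda>n. coeff (Q n) k) (\<lambda>n. coeff (Q' n) k)"
  shows "heq U \<eta> (\<lambda>n. hres d (P n) (Q n)) (\<lambda>n. hres d (P' n) (Q' n))"
  unfolding hres_def
proof (rule heq_det[OF sylvester_hom_carrier sylvester_hom_carrier])
  fix i j assume "i < 2*d" "j < 2*d"
  then show "in_H U \<eta> (\<lambda>n. sylvester_hom d (P' n) (Q' n) $$ (i, j))"
    using assms(1,2) by (rule in_H_sylvester_hom[rotated 2])
  show "heq U \<eta> (\<lambda>n. sylvester_hom d (P n) (Q n) $$ (i, j))
                (\<lambda>n. sylvester_hom d (P' n) (Q' n) $$ (i, j))"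
    using assms(3,4) \<open>i < 2*d\<close> \<open>j < 2*d\<close>
    by (cases "i < d"; cases "i \<le> j \<and> j \<le> i + d"; cases "i - d \<le> j \<and> j \<le> i")
      (simp_all add: sylvester_hom_index heq_refl)
qed


lemma hzero_if_mob_H_image_hzero:
  assumes N: "mob_H U \<eta> (\<lambda>n. (\<alpha> n, \<beta> n, \<gamma> n, \<epsilon> n))" and "in_H U \<eta> u" "in_H U \<eta> v"
    and "hzero U \<eta> (\<lambda>n. \<alpha> n * u n + \<beta> n * v n)" "hzero U \<eta> (\<lambda>n. \<gamma> n * u n + \<epsilon> n * v n)"
  shows "hzero U \<eta> u \<and> hzero U \<eta> v"
proof -
  have H: "in_H U \<eta> \<alpha>" "in_H U \<eta> \<beta>" "in_H U \<eta> \<gamma>" "in_H U \<eta> \<epsilon>"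
    and det: "\<not> hzero U \<eta> (\<lambda>n. \<alpha> n * \<epsilon> n - \<beta> n * \<gamma> n)"
    using N unfolding mob_H_def mob_det_def by auto
  have "in_H U \<eta> (\<lambda>n. \<alpha> n * \<epsilon> n - \<beta> n * \<gamma> n)" using H by (intro in_H_diff in_H_mult)
  moreover have "hzero U \<eta> (\<lambda>n. \<epsilon> n * (\<alpha> n * u n + \<beta> n * v n) - \<beta> n * (\<gamma> n * u n + \<epsilon> n * v n))"
    using assms(4,5) H by (intro hzero_diff hzero_mult_right)
  then have "hzero U \<eta> (\<lambda>n. (\<alpha> n * \<epsilon> n - \<beta> n * \<gamma> n) * u n)" by (simp add: algebra_simps)
  moreover have "hzero U \<eta> (\<lambda>n. \<alpha> n * (\<gamma> n * u n + \<epsilon> n * v n) - \<gamma> n * (\<alpha> n * u n + \<beta> n * v n))"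
    using assms(4,5) H by (intro hzero_diff hzero_mult_right)
  then have "hzero U \<eta> (\<lambda>n. (\<alpha> n * \<epsilon> n - \<beta> n * \<gamma> n) * v n)" by (simp add: algebra_simps)
  ultimately show ?thesis using hzero_mult_iff det assms(2,3) by blast
qed

(* Cramer's rule: x^(2d-1-k) y^k Res(A,B) is the determinant of the Sylvester matrix S with its
   k-th column replaced by S v, v = (x^(2d-1-j) y^j)_j, and the entries of S v are multiples of
   A(x,y) and B(x,y). *)
lemma hzero_monomial_mult_hres_if_common_zero:
  assumes cA: "\<And>k. in_H U \<eta> (\<lambda>n. coeff (A n) k)" and cB: "\<And>k. in_H U \<eta> (\<lambda>n. coeff (B n) k)"
    and x: "in_H U \<eta> x" and y: "in_H U \<eta> y"
    and zA: "hzero U \<eta> (\<lambda>n. hform_eval d (A n) (x n) (y n))"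
    and zB: "hzero U \<eta> (\<lambda>n. hform_eval d (B n) (x n) (y n))"
    and k: "k < 2*d"
  shows "hzero U \<eta> (\<lambda>n. x n ^ (2*d-1-k) * y n ^ k * hres d (A n) (B n))"
proof -
  define S where "S n = sylvester_hom d (A n) (B n)" for n
  define v where "v n = vec (2*d) (\<lambda>j. x n ^ (2*d-1-j) * y n ^ j)" for n
  have S: "S n \<in> carrier_mat (2*d) (2*d)" for n
    unfolding S_def by (rule sylvester_hom_carrier)
  then have dim: "dim_row (S n) = 2*d" "dim_col (S n) = 2*d" for n by auto
  have Sv: "hzero U \<eta> (\<lambda>n. (S n *\<^sub>v v n) $ i)" if "i < 2*d" for i
  proof (cases "i < d")
    case True
    have "hzero U \<eta> (\<lambda>n. (x n ^ (d-1-i) * y n ^ i) * hform_eval d (A n) (x n) (y n))"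
      using zA x y by (intro hzero_mult_right in_H_mult in_H_power)
    then show ?thesis
      unfolding S_def v_def sylvester_hom_mult_monomials[OF that] using True by (simp add: mult.assoc)
  next
    case False
    have "hzero U \<eta> (\<lambda>n. (x n ^ (2*d-1-i) * y n ^ (i-d)) * hform_eval d (B n) (x n) (y n))"
      using zB x y by (intro hzero_mult_right in_H_mult in_H_power)
    then show ?thesis
      unfolding S_def v_def sylvester_hom_mult_monomials[OF that] using False by (simp add: mult.assoc)
  qed
  have "heq U \<eta> (\<lambda>n. det (replace_col (S n) (S n *\<^sub>v v n) k))
                (\<lambda>n. det (replace_col (S n) (0\<^sub>v (2*d)) k))"
  proof (rule heq_det)
    fix i j assume ij: "i < 2*d" "j < 2*d"
    have "in_H U \<eta> (\<lambda>n. S n $$ (i, j))"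
      unfolding S_def using cA cB ij by (rule in_H_sylvester_hom)
    then show "in_H U \<eta> (\<lambda>n. replace_col (S n) (0\<^sub>v (2*d)) k $$ (i, j))"
      using ij by (cases "j = k") (simp_all add: replace_col_def dim in_H_const)
    show "heq U \<eta> (\<lambda>n. replace_col (S n) (S n *\<^sub>v v n) k $$ (i, j))
                  (\<lambda>n. replace_col (S n) (0\<^sub>v (2*d)) k $$ (i, j))"
      using ij Sv[OF ij(1)]
      by (cases "j = k") (simp_all add: replace_col_def dim heq_def hzero_const_iff)
  qed (auto simp: replace_col_def dim)
  moreover have "det (replace_col (S n) (S n *\<^sub>v v n) k) = v n $ k * hres d (A n) (B n)" for n
    unfolding hres_def S_def using cramer_lemma_mat[OF S _ k] by (simp add: S_def v_def)
  moreover have "det (replace_col (S n) (0\<^sub>v (2*d)) k) = 0" for n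
  proof -
    have "S n *\<^sub>v 0\<^sub>v (2*d) = 0\<^sub>v (2*d)" using S[of n] by auto
    then show ?thesis using cramer_lemma_mat[OF S _ k, of "0\<^sub>v (2*d)" n] k by simp
  qed
  ultimately show ?thesis using k unfolding heq_def by (simp add: v_def)
qed

lemma common_zero_hzero_if_coprime_H:
  assumes "1 \<le> d" and A: "form_H U \<eta> d A" and B: "form_H U \<eta> d B" and cop: "coprime_H U \<eta> d A B"
    and x: "in_H U \<eta> x" and y: "in_H U \<eta> y"
    and zA: "hzero U \<eta> (\<lambda>n. hform_eval d (A n) (x n) (y n))"
    and zB: "hzero U \<eta> (\<lambda>n. hform_eval d (B n) (x n) (y n))"
  shows "hzero U \<eta> x \<and> hzero U \<eta> y"
proof -
  have cA: "\<And>k. in_H U \<eta> (\<lambda>n. coeff (A n) k)" and cB: "\<And>k. in_H U \<eta> (\<lambda>n. coeff (B n) k)"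
    using A B unfolding form_H_def by auto
  have res: "\<not> hzero U \<eta> (\<lambda>n. hres d (A n) (B n))" and "in_H U \<eta> (\<lambda>n. hres d (A n) (B n))"
    using cop \<open>1 \<le> d\<close> cA cB unfolding coprime_H_def by (auto intro: in_H_hres)
  moreover have "0 < 2*d-1" using \<open>1 \<le> d\<close> by simp
  moreover have "hzero U \<eta> (\<lambda>n. x n ^ (2*d-1) * hres d (A n) (B n))"
    and "hzero U \<eta> (\<lambda>n. y n ^ (2*d-1) * hres d (A n) (B n))"
    using hzero_monomial_mult_hres_if_common_zero[OF cA cB x y zA zB, of 0]
      hzero_monomial_mult_hres_if_common_zero[OF cA cB x y zA zB, of "2*d-1"] \<open>1 \<le> d\<close>
    by simp_all
  ultimately show ?thesis
    using x y by (simp add: hzero_mult_iff in_H_power hzero_power_iff)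
qed

section \<open>Conjugates with complex coefficients\<close>

lemma hzero_hform_eval_if_feq_smult:
  assumes "in_H U \<eta> l" "feq U \<eta> C (\<lambda>n. smult (l n) a)" "hform_eval d a x y = 0"
  shows "hzero U \<eta> (\<lambda>n. hform_eval d (C n) x y)"
proof -
  have "heq U \<eta> (\<lambda>n. hform_eval d (C n) x y) (\<lambda>n. hform_eval d (smult (l n) a) x y)"
    using assms(1,2) unfolding feq_def
    by (intro heq_hform_eval in_H_const) (simp_all add: in_H_mult in_H_const)
  then show ?thesis using assms(3) unfolding heq_def by (simp add: hform_eval_smult)
qed

lemma hres_ne_0_if_conjugate_complex:
  fixes a b :: "complex poly"
  assumes "1 \<le> \<delta>" and A: "form_H U \<eta> \<delta> A" and B: "form_H U \<eta> \<delta> B" and cop: "coprime_H U \<eta> \<delta> A B"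
    and N: "mob_H U \<eta> N" and a: "degree a \<le> \<delta>" and b: "degree b \<le> \<delta>" and l: "in_H U \<eta> l"
    and C: "feq U \<eta> (conjF \<delta> N A B) (\<lambda>n. smult (l n) a)"
    and D: "feq U \<eta> (conjG \<delta> N A B) (\<lambda>n. smult (l n) b)"
  shows "hres \<delta> a b \<noteq> 0"
proof
  assume "hres \<delta> a b = 0"
  then obtain x y where xy: "x \<noteq> 0 \<or> y \<noteq> 0" "hform_eval \<delta> a x y = 0" "hform_eval \<delta> b x y = 0"
    using hres_eq_0_imp_common_zero[OF \<open>1 \<le> \<delta>\<close> a b] by blast
  define \<alpha> \<beta> \<gamma> \<epsilon> where "\<alpha> n = fst (N n)" and "\<beta> n = fst (snd (N n))"
    and "\<gamma> n = fst (snd (snd (N n)))" and "\<epsilon> n = snd (snd (snd (N n)))" for n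
  have N_eq: "N n = (\<alpha> n, \<beta> n, \<gamma> n, \<epsilon> n)" for n
    by (simp add: \<alpha>_def \<beta>_def \<gamma>_def \<epsilon>_def)
  have N': "mob_H U \<eta> (\<lambda>n. (\<alpha> n, \<beta> n, \<gamma> n, \<epsilon> n))"
    using N unfolding N_eq[abs_def] .
  then have adj: "mob_H U \<eta> (\<lambda>n. (\<epsilon> n, - \<beta> n, - \<gamma> n, \<alpha> n))"
    unfolding mob_H_def mob_det_def by (simp add: in_H_uminus_iff mult.commute)
  define x' y' where "x' n = \<epsilon> n * x - \<beta> n * y" and "y' n = \<alpha> n * y - \<gamma> n * x" for n
  have x': "in_H U \<eta> x'" and y': "in_H U \<eta> y'"
    using N' unfolding x'_def[abs_def] y'_def[abs_def] mob_H_def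
    by (auto intro!: in_H_diff in_H_mult in_H_const)
  have cA: "\<And>k. in_H U \<eta> (\<lambda>n. coeff (A n) k)" and cB: "\<And>k. in_H U \<eta> (\<lambda>n. coeff (B n) k)"
    using A B unfolding form_H_def by auto
  have "hzero U \<eta> (\<lambda>n. \<alpha> n * hform_eval \<delta> (A n) (x' n) (y' n) + \<beta> n * hform_eval \<delta> (B n) (x' n) (y' n))"
    and "hzero U \<eta> (\<lambda>n. \<gamma> n * hform_eval \<delta> (A n) (x' n) (y' n) + \<epsilon> n * hform_eval \<delta> (B n) (x' n) (y' n))"
    using hzero_hform_eval_if_feq_smult[OF l C xy(2)] hzero_hform_eval_if_feq_smult[OF l D xy(3)]
    unfolding conjF_def conjG_def N_eq hform_eval_conj_mob x'_def y'_def by simp_all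
  then have "hzero U \<eta> (\<lambda>n. hform_eval \<delta> (A n) (x' n) (y' n))
      \<and> hzero U \<eta> (\<lambda>n. hform_eval \<delta> (B n) (x' n) (y' n))"
    using cA cB x' y' by (intro hzero_if_mob_H_image_hzero[OF N'] in_H_hform_eval)
  then have "hzero U \<eta> x' \<and> hzero U \<eta> y'"
    using common_zero_hzero_if_coprime_H[OF \<open>1 \<le> \<delta>\<close> A B cop x' y'] by blast
  then have "hzero U \<eta> (\<lambda>n. x) \<and> hzero U \<eta> (\<lambda>n. y)"
    using adj
    by (intro hzero_if_mob_H_image_hzero) (auto simp: x'_def[abs_def] y'_def[abs_def] in_H_const)
  with xy(1) show False by (simp add: hzero_const_iff)
qed

lemma has_abs_coeff_if_feq_smult:
  assumes "has_abs l r" "feq U \<eta> C (\<lambda>n. smult (l n) a)"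
  shows "has_abs (\<lambda>n. coeff (C n) k) (r * (if coeff a k = 0 then 0 else 1))"
proof (rule has_abs_if_heq)
  show "heq U \<eta> (\<lambda>n. coeff (C n) k) (\<lambda>n. l n * coeff a k)"
    using assms(2) unfolding feq_def by simp
qed (rule has_abs_mult[OF assms(1) has_abs_const])

lemma maxcoef_if_feq_smult:
  fixes a b :: "complex poly"
  assumes r: "has_abs l r" "0 < r" and ab: "\<exists>k\<le>d. coeff a k \<noteq> 0 \<or> coeff b k \<noteq> 0"
    and C: "feq U \<eta> C (\<lambda>n. smult (l n) a)" and D: "feq U \<eta> D (\<lambda>n. smult (l n) b)"
  shows "maxcoef U \<eta> d C D = ereal r"
  unfolding maxcoef_def hnorm_eq_hval using ab \<open>0 < r\<close>
  by (intro Max_eqI)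
    (auto simp: hval_eq_if_has_abs[OF has_abs_coeff_if_feq_smult[OF r(1) C]]
      hval_eq_if_has_abs[OF has_abs_coeff_if_feq_smult[OF r(1) D]])

lemma hnorm_hres_if_feq_smult:
  fixes a b :: "complex poly"
  assumes r: "has_abs l r" and "hres d a b \<noteq> 0"
    and C: "feq U \<eta> C (\<lambda>n. smult (l n) a)" and D: "feq U \<eta> D (\<lambda>n. smult (l n) b)"
  shows "hnorm U \<eta> (\<lambda>n. hres d (C n) (D n)) = ereal (r ^ (2*d))"
proof -
  have "in_H U \<eta> l" using r in_H_iff_has_abs by blast
  then have "heq U \<eta> (\<lambda>n. hres d (C n) (D n)) (\<lambda>n. hres d (smult (l n) a) (smult (l n) b))"
    using C D unfolding feq_def by (intro heq_hres) (simp_all add: in_H_mult in_H_const)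
  moreover have "has_abs (\<lambda>n. hres d (smult (l n) a) (smult (l n) b)) (r ^ (2*d) * 1)"
    using has_abs_mult[OF has_abs_power[OF r] has_abs_const[of "hres d a b"]] assms(2)
    unfolding hres_smult by simp
  ultimately show ?thesis
    unfolding hnorm_eq_hval by (simp add: hval_eq_if_has_abs has_abs_if_heq)
qed

lemma good_red_if_conjugate_complex:
  fixes a b :: "complex poly"
  assumes A: "form_H U \<eta> \<delta> A" and B: "form_H U \<eta> \<delta> B" and cop: "coprime_H U \<eta> \<delta> A B"
    and N: "mob_H U \<eta> N" and a: "degree a \<le> \<delta>" and b: "degree b \<le> \<delta>"
    and l: "in_H U \<eta> l" "\<not> hzero U \<eta> l"
    and C: "feq U \<eta> (conjF \<delta> N A B) (\<lambda>n. smult (l n) a)"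
    and D: "feq U \<eta> (conjG \<delta> N A B) (\<lambda>n. smult (l n) b)"
  shows "good_red U \<eta> \<delta> (conjF \<delta> N A B) (conjG \<delta> N A B)"
proof (cases "\<delta> = 0")
  case True
  then show ?thesis
    using hval_eq_if_has_abs[OF has_abs_const[of 1]]
    unfolding good_red_def by (simp add: hres_degree_0 hnorm_eq_hval one_ereal_def)
next
  case False
  then have "1 \<le> \<delta>" by simp
  have res: "hres \<delta> a b \<noteq> 0"
    using hres_ne_0_if_conjugate_complex[OF \<open>1 \<le> \<delta>\<close> A B cop N a b l(1) C D] .
  then have "a \<noteq> 0 \<or> b \<noteq> 0" using hres_0_0[OF \<open>1 \<le> \<delta>\<close>] by auto
  then have "\<exists>k\<le>\<delta>. coeff a k \<noteq> 0 \<or> coeff b k \<noteq> 0"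
    using a b by (metis coeff_0 le_degree leading_coeff_0_iff order.trans)
  moreover obtain r where r: "has_abs l r" using l(1) in_H_iff_has_abs by auto
  moreover have "0 < r"
    using r l(2) has_abs_nonneg[OF r] unfolding hzero_iff_has_abs by (cases "r = 0") auto
  ultimately show ?thesis
    unfolding good_red_def
    using maxcoef_if_feq_smult[OF r \<open>0 < r\<close> _ C D] hnorm_hres_if_feq_smult[OF r res C D] by simp
qed

end

theorem mainTheorem9:
  fixes U :: "nat filter" and d :: nat and P Q :: "nat \<Rightarrow> complex poly"
    and M :: "nat \<Rightarrow> mob" and \<eta> :: "nat \<Rightarrow> real"
  assumes "nonprincipal_ultrafilter U"
    and "d \<ge> 2"
    and "\<forall>n. ratmap d (P n) (Q n)"
    and "g_rescaling M \<eta>"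
    and "adapted U d P Q M \<eta>"
    and "\<exists>\<delta> A B N a b l. is_limit U \<eta> d (conjF d M P Q) (conjG d M P Q) \<delta> A B
           \<and> mob_H U \<eta> N \<and> degree a \<le> \<delta> \<and> degree b \<le> \<delta>
           \<and> in_H U \<eta> l \<and> \<not> hzero U \<eta> l
           \<and> feq U \<eta> (conjF \<delta> N A B) (\<lambda>n. smult (l n) a)
           \<and> feq U \<eta> (conjG \<delta> N A B) (\<lambda>n. smult (l n) b)"
  shows "scale_equiv U \<eta> one_scale"
proof (rule ccontr)
  assume nontrivial: "\<not> scale_equiv U \<eta> one_scale"
  have scale: "is_scale \<eta>" using assms(4) unfolding g_rescaling_def by simp
  have less: "scale_less U \<eta> one_scale"
    using scale_less_one_scale_if_not_equiv[OF assms(1) scale nontrivial] .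
  interpret vanishing_scale U \<eta>
    using assms(1) scale tendsto_0_if_scale_less_one_scale[OF assms(1) less]
    by unfold_locales (auto simp: is_scale_def)
  obtain \<delta> A B N a b l where lim: "is_limit U \<eta> d (conjF d M P Q) (conjG d M P Q) \<delta> A B"
    and N: "mob_H U \<eta> N" and "degree a \<le> \<delta>" "degree b \<le> \<delta>" "in_H U \<eta> l" "\<not> hzero U \<eta> l"
    and "feq U \<eta> (conjF \<delta> N A B) (\<lambda>n. smult (l n) a)" "feq U \<eta> (conjG \<delta> N A B) (\<lambda>n. smult (l n) b)"
    using assms(6) by blast
  then have "good_red U \<eta> \<delta> (conjF \<delta> N A B) (conjG \<delta> N A B)"
    unfolding is_limit_def by (intro good_red_if_conjugate_complex) auto
  then have "pot_good_red U \<eta> \<delta> A B"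
    unfolding pot_good_red_def using nontrivial N by blast
  moreover have "\<not> pot_good_red U \<eta> \<delta> A B"
    using assms(5) less lim unfolding adapted_def Let_def by blast
  ultimately show False by contradiction
qed

end
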